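(* Let $n\ge 2$ and let $d_1\ge d_2\ge\cdots\ge d_n\ge 1$ be integers, with node $k$ of $V=\{1,\dots,n\}$ assigned the value $d_k$. Fix a node $i\in V$ and a set $X(i)=\{j_1,\dots,j_m\}\subset V\setminus\{i\}$ with $m\le n-1-d_i$. Let $L(i)$ be the set of the $d_i$ smallest indices in $V\setminus(X(i)\cup\{i\})$. Then there is a simple graph $G(V,E)$ in which each node $k$ has degree $d_k$ and such that $(i,j)\notin E$ for all $j\in X(i)$, if and only if the sequence $d'|_{L(i)}$ reduced by $L(i)$ is graphical.
   Context: A sequence of nonnegative integers $(e_1,\dots,e_n)$ is graphical if there is a simple undirected graph (no loops, no multiple edges) on vertex set $\{1,\dots,n\}$ in which vertex $k$ has degree $e_k$ for every $k$ (vertices of degree $0$ are allowed). For a set $A(i)\subset V\setminus\{i\}$ with $|A(i)|=d_i$, the sequence reduced by $A(i)$ is $d'|_{A(i)}=(d'_1,\dots,d'_n)$ with $d'_k=d_k-1$ if $k\in A(i)$, $d'_k=d_k$ if $k\in V\setminus(A(i)\cup\{i\})$, and $d'_i=0$. *)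

theory Defs
  imports Main
begin

definition simple_graph :: "nat \<Rightarrow> (nat \<Rightarrow> nat \<Rightarrow> bool) \<Rightarrow> bool" where
  "simple_graph n E \<longleftrightarrow>
     (\<forall>x y. E x y \<longrightarrow> x \<in> {1..n} \<and> y \<in> {1..n}) \<and>
     (\<forall>x y. E x y \<longrightarrow> E y x) \<and>
     (\<forall>x. \<not> E x x)"

definition degree :: "nat \<Rightarrow> (nat \<Rightarrow> nat \<Rightarrow> bool) \<Rightarrow> nat \<Rightarrow> nat" where
  "degree n E k = card {j \<in> {1..n}. E k j}"

definition graphical :: "nat \<Rightarrow> (nat \<Rightarrow> nat) \<Rightarrow> bool" where
  "graphical n e \<longleftrightarrow>
     (\<exists>E. simple_graph n E \<and> (\<forall>k \<in> {1..n}. degree n E k = e k))"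

definition reduced :: "(nat \<Rightarrow> nat) \<Rightarrow> nat \<Rightarrow> nat set \<Rightarrow> nat \<Rightarrow> nat" where
  "reduced d i A k = (if k = i then 0 else if k \<in> A then d k - 1 else d k)"

definition smallest :: "nat \<Rightarrow> nat set \<Rightarrow> nat set" where
  "smallest r S = {j \<in> S. card {l \<in> S. l < j} < r}"

end

theory Submission
  imports Defs
begin

text \<open>If some realization avoids X(i), then a sequence of 2-switches moves the neighbourhood of i
onto L(i): whenever i is adjacent to u but not to a smaller-indexed l \<in> L(i), the degree of l is
at least that of u, and since u has the extra neighbour i, l has a neighbour w not adjacent to u;
replacing the edges iu, lw by il, uw preserves all degrees and brings the neighbourhood one step
closer to L(i). Once the neighbourhood of i is exactly L(i), deleting i yields a realization of
the reduced sequence, and conversely joining i to L(i) in a realization of the reduced sequence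
gives a realization of d in which i has no neighbour in X(i).\<close>

lemma card_smallest:
  assumes "finite S" and "r \<le> card S"
  shows "card (smallest r S) = r"
proof -
  define rk where "rk j = card {l \<in> S. l < j}" for j
  have rk_less: "rk j < rk j'" if "j \<in> S" "j' \<in> S" "j < j'" for j j'
    unfolding rk_def by (rule psubset_card_mono) (use that assms(1) in auto)
  have inj: "inj_on rk S"
    by (rule inj_onI) (metis linorder_neqE_nat rk_less less_irrefl)
  have "rk ` S \<subseteq> {..<card S}"
    unfolding rk_def using assms(1) by (auto intro: psubset_card_mono)
  then have rk_image: "rk ` S = {..<card S}"
    using card_image[OF inj] by (metis card_lessThan card_subset_eq finite_lessThan)
  have smallest_rk: "smallest r S = {j \<in> S. rk j < r}"
    unfolding smallest_def rk_def by simp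
  have "rk ` smallest r S = {..<r}"
    using rk_image assms(2) unfolding smallest_rk by auto
  moreover have "inj_on rk (smallest r S)"
    using inj smallest_rk by (auto intro: inj_on_subset)
  ultimately show ?thesis
    by (metis card_image card_lessThan)
qed

lemma smallest_subset: "smallest r S \<subseteq> S"
  unfolding smallest_def by auto

lemma smallest_less:
  assumes "l \<in> smallest r S" "u \<in> S" "u \<notin> smallest r S"
  shows "l < u"
proof (rule ccontr)
  assume "\<not> l < u"
  with assms have "u < l" by (metis linorder_neqE_nat)
  then have "card {x \<in> S. x < u} \<le> card {x \<in> S. x < l}"
    by (intro card_mono) auto
  then show False
    using assms unfolding smallest_def by auto
qed

definition neighbours :: "nat \<Rightarrow> (nat \<Rightarrow> nat \<Rightarrow> bool) \<Rightarrow> nat \<Rightarrow> nat set" where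
  "neighbours n E k = {j \<in> {1..n}. E k j}"

lemma degree_eq_card_neighbours: "degree n E k = card (neighbours n E k)"
  unfolding degree_def neighbours_def ..

lemma finite_neighbours [simp]: "finite (neighbours n E k)"
  unfolding neighbours_def by simp

lemma simple_graphD:
  assumes "simple_graph n E"
  shows simple_graph_vertices: "E x y \<Longrightarrow> x \<in> {1..n} \<and> y \<in> {1..n}"
    and simple_graph_sym: "E x y \<Longrightarrow> E y x"
    and simple_graph_irrefl: "\<not> E x x"
  using assms unfolding simple_graph_def by blast+

definition two_switch :: "(nat \<Rightarrow> nat \<Rightarrow> bool) \<Rightarrow> nat \<Rightarrow> nat \<Rightarrow> nat \<Rightarrow> nat \<Rightarrow> nat \<Rightarrow> nat \<Rightarrow> bool" where
  "two_switch E a b c e x y \<longleftrightarrow>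
     (E x y \<and> \<not> (x = a \<and> y = b) \<and> \<not> (x = b \<and> y = a) \<and> \<not> (x = c \<and> y = e) \<and> \<not> (x = e \<and> y = c))
     \<or> (x = a \<and> y = c) \<or> (x = c \<and> y = a) \<or> (x = b \<and> y = e) \<or> (x = e \<and> y = b)"

lemma card_insert_Diff_swap:
  "finite A \<Longrightarrow> x \<in> A \<Longrightarrow> y \<notin> A \<Longrightarrow> card (insert y (A - {x})) = card A"
  by (simp add: card_insert_disjoint card_Diff_singleton)
     (metis Suc_pred card_gt_0_iff empty_iff)

lemma
  assumes G: "simple_graph n E" and "E a b" "E c e" "\<not> E a c" "\<not> E b e"
    and "distinct [a, b, c, e]"
  shows simple_graph_two_switch: "simple_graph n (two_switch E a b c e)"
    and degree_two_switch: "degree n (two_switch E a b c e) k = degree n E k"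
proof -
  note sym = simple_graph_sym[OF G]
  have V: "a \<in> {1..n}" "b \<in> {1..n}" "c \<in> {1..n}" "e \<in> {1..n}"
    using simple_graph_vertices[OF G] assms(2,3) by auto
  show "simple_graph n (two_switch E a b c e)"
    using V G assms(6) unfolding simple_graph_def two_switch_def by auto
  let ?N = "neighbours n E k" and ?N' = "neighbours n (two_switch E a b c e) k"
  have swap: "card ?N' = card ?N"
    if "?N' = insert y (?N - {x})" "x \<in> ?N" "y \<notin> ?N" for x y
    using that card_insert_Diff_swap[OF finite_neighbours] by presburger
  have "card ?N' = card ?N"
  proof -
    consider "k = a" | "k = b" | "k = c" | "k = e" | "k \<notin> {a, b, c, e}" by blast
    then show ?thesis
    proof cases
      case 1
      then show ?thesis
        by (intro swap[of c b]) (use V assms sym in \<open>auto simp: neighbours_def two_switch_def\<close>)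
    next
      case 2
      then show ?thesis
        by (intro swap[of e a]) (use V assms sym in \<open>auto simp: neighbours_def two_switch_def\<close>)
    next
      case 3
      then show ?thesis
        by (intro swap[of a e]) (use V assms sym in \<open>auto simp: neighbours_def two_switch_def\<close>)
    next
      case 4
      then show ?thesis
        by (intro swap[of b c]) (use V assms sym in \<open>auto simp: neighbours_def two_switch_def\<close>)
    next
      case 5
      then have "?N' = ?N"
        unfolding neighbours_def two_switch_def by auto
      then show ?thesis by simp
    qed
  qed
  then show "degree n (two_switch E a b c e) k = degree n E k"
    by (simp add: degree_eq_card_neighbours)
qed

text \<open>u has the neighbour i that l lacks, so if l has no neighbour outside those of u, the
neighbourhood of l (minus u) is a proper subset of that of u (minus l), forcing a smaller degree.\<close>
lemma exists_switch_partner: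
  assumes G: "simple_graph n E" and "i \<in> {1..n}" "l \<in> {1..n}" "u \<in> {1..n}"
    and "l \<noteq> i" "E i u" "\<not> E i l" and "degree n E u \<le> degree n E l"
  shows "\<exists>w. E l w \<and> w \<noteq> u \<and> \<not> E u w"
proof (rule ccontr)
  assume no_partner: "\<not> ?thesis"
  define A where "A = neighbours n E l - {u}"
  define B where "B = neighbours n E u - {l}"
  have "A \<subseteq> B"
    using no_partner simple_graph_irrefl[OF G] unfolding A_def B_def neighbours_def by auto
  moreover have "i \<in> B" "i \<notin> A"
    using assms(2,5,6,7) simple_graph_sym[OF G] simple_graph_irrefl[OF G]
    unfolding A_def B_def neighbours_def by auto
  ultimately have "card A < card B"
    by (intro psubset_card_mono) (auto simp: B_def)
  moreover have "card A = degree n E l - (if u \<in> neighbours n E l then 1 else 0)"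
    unfolding A_def degree_eq_card_neighbours by (simp add: card_Diff_singleton_if)
  moreover have "card B = degree n E u - (if l \<in> neighbours n E u then 1 else 0)"
    unfolding B_def degree_eq_card_neighbours by (simp add: card_Diff_singleton_if)
  moreover have "u \<in> neighbours n E l \<longleftrightarrow> l \<in> neighbours n E u"
    using assms(3,4) simple_graph_sym[OF G] unfolding neighbours_def by blast
  ultimately show False
    using assms(8) by (simp split: if_splits)
qed

lemma exists_realization_with_neighbours:
  assumes G: "simple_graph n E" and deg: "\<forall>k \<in> {1..n}. degree n E k = d k"
    and "i \<in> {1..n}" and "S \<subseteq> {1..n} - {i}" and "neighbours n E i \<subseteq> S"
    and "L \<subseteq> S" and "card L = d i"
    and dominant: "\<forall>l \<in> L. \<forall>u \<in> S - L. d u \<le> d l"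
  shows "\<exists>E'. simple_graph n E' \<and> (\<forall>k \<in> {1..n}. degree n E' k = d k) \<and> neighbours n E' i = L"
  using G deg assms(5)
proof (induction "card (L - neighbours n E i)" arbitrary: E rule: less_induct)
  case less
  note G = less.prems(1) and deg = less.prems(2)
  let ?N = "neighbours n E i"
  have finite_L: "finite L"
    using assms(4,6) finite_subset by (metis finite_Diff finite_atLeastAtMost)
  have card_N: "card ?N = d i"
    using deg assms(3) by (simp add: degree_eq_card_neighbours)
  show ?case
  proof (cases "?N = L")
    case True
    then show ?thesis using G deg by blast
  next
    case False
    have "\<not> L \<subseteq> ?N" "\<not> ?N \<subseteq> L"
      using False card_N assms(7) finite_L card_subset_eq[OF finite_neighbours]
      by (metis card_subset_eq)+
    then obtain l u where l: "l \<in> L" "l \<notin> ?N" and u: "u \<in> ?N" "u \<notin> L"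
      by blast
    have lu: "l \<in> {1..n}" "u \<in> {1..n}" "l \<noteq> i" "u \<noteq> i" "l \<noteq> u"
      using l u assms(4,6) less.prems(3) by auto
    have "E i u" "\<not> E i l"
      using l u lu unfolding neighbours_def by auto
    moreover have "degree n E u \<le> degree n E l"
      using dominant l u lu deg less.prems(3) by auto
    ultimately obtain w where w: "E l w" "w \<noteq> u" "\<not> E u w"
      using exists_switch_partner[OF G assms(3)] lu by metis
    have "w \<noteq> l" "w \<noteq> i"
      using w \<open>\<not> E i l\<close> simple_graph_irrefl[OF G] simple_graph_sym[OF G] by auto
    then have distinct: "distinct [i, u, l, w]"
      using lu w by auto
    define E' where "E' = two_switch E i u l w"
    have G': "simple_graph n E'" and deg': "\<forall>k \<in> {1..n}. degree n E' k = d k"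
      unfolding E'_def
      using simple_graph_two_switch[OF G \<open>E i u\<close> w(1) \<open>\<not> E i l\<close> w(3) distinct]
        degree_two_switch[OF G \<open>E i u\<close> w(1) \<open>\<not> E i l\<close> w(3) distinct] deg
      by auto
    have N': "neighbours n E' i = insert l (?N - {u})"
      using lu distinct unfolding E'_def two_switch_def neighbours_def by auto
    have "L - neighbours n E' i = (L - ?N) - {l}"
      using N' u by auto
    then have "card (L - neighbours n E' i) < card (L - ?N)"
      using l finite_L by (metis DiffI card_Diff1_less finite_Diff)
    moreover have "neighbours n E' i \<subseteq> S"
      using N' less.prems(3) l assms(6) by auto
    ultimately show ?thesis
      using less.hyps G' deg' by blast
  qed
qed

lemma graphical_reduced_of_neighbours:
  assumes G: "simple_graph n E" and deg: "\<forall>k \<in> {1..n}. degree n E k = d k"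
    and "i \<in> {1..n}" and N: "neighbours n E i = A"
  shows "graphical n (reduced d i A)"
proof -
  define E' where "E' x y \<longleftrightarrow> E x y \<and> x \<noteq> i \<and> y \<noteq> i" for x y
  have "simple_graph n E'"
    using G unfolding simple_graph_def E'_def by blast
  moreover have "degree n E' k = reduced d i A k" if "k \<in> {1..n}" for k
  proof -
    have "neighbours n E' k = neighbours n E k - {i}" if "k \<noteq> i"
      using that unfolding neighbours_def E'_def by auto
    moreover have "i \<in> neighbours n E k \<longleftrightarrow> k \<in> A"
      using N assms(3) \<open>k \<in> {1..n}\<close> simple_graph_sym[OF G] unfolding neighbours_def by blast
    ultimately show ?thesis
      using deg \<open>k \<in> {1..n}\<close>
      by (auto simp: reduced_def degree_eq_card_neighbours card_Diff_singleton_if E'_def neighbours_def)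
  qed
  ultimately show ?thesis
    unfolding graphical_def by blast
qed

lemma realization_of_graphical_reduced:
  assumes "graphical n (reduced d i A)" and "i \<in> {1..n}" and A: "A \<subseteq> {1..n} - {i}"
    and "card A = d i" and pos: "\<forall>k \<in> A. d k \<ge> 1"
  shows "\<exists>E. simple_graph n E \<and> (\<forall>k \<in> {1..n}. degree n E k = d k) \<and> neighbours n E i = A"
proof -
  obtain E' where G: "simple_graph n E'" and deg: "\<forall>k \<in> {1..n}. degree n E' k = reduced d i A k"
    using assms(1) unfolding graphical_def by blast
  have "card (neighbours n E' i) = 0"
    using deg assms(2) by (simp add: degree_eq_card_neighbours reduced_def)
  then have isolated: "\<not> E' i j" for j
    using simple_graph_vertices[OF G] unfolding neighbours_def by auto
  define E where "E x y \<longleftrightarrow> E' x y \<or> (x = i \<and> y \<in> A) \<or> (y = i \<and> x \<in> A)" for x y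
  have "simple_graph n E"
    using G A assms(2) unfolding simple_graph_def E_def by blast
  moreover have N: "neighbours n E i = A"
    using isolated A unfolding neighbours_def E_def by auto
  moreover have "degree n E k = d k" if k: "k \<in> {1..n}" for k
  proof -
    consider "k = i" | "k \<noteq> i" "k \<in> A" | "k \<noteq> i" "k \<notin> A" by blast
    then show ?thesis
    proof cases
      case 1
      then show ?thesis using N assms(4) by (simp add: degree_eq_card_neighbours)
    next
      case 2
      have "neighbours n E k = insert i (neighbours n E' k)"
        using 2 assms(2) unfolding neighbours_def E_def by auto
      moreover have "i \<notin> neighbours n E' k"
        using isolated simple_graph_sym[OF G] unfolding neighbours_def by blast
      moreover have "d k \<ge> 1"
        using 2 pos by blast
      ultimately show ?thesis
        using 2 k deg by (simp add: degree_eq_card_neighbours reduced_def)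
    next
      case 3
      then have "neighbours n E k = neighbours n E' k"
        unfolding neighbours_def E_def by auto
      then show ?thesis
        using 3 k deg by (simp add: degree_eq_card_neighbours reduced_def)
    qed
  qed
  ultimately show ?thesis by blast
qed

theorem theorem3:
  fixes n i :: nat and d :: "nat \<Rightarrow> nat" and X :: "nat set"
  assumes "n \<ge> 2"
    and "\<forall>k l. 1 \<le> k \<and> k \<le> l \<and> l \<le> n \<longrightarrow> d l \<le> d k"
    and "\<forall>k \<in> {1..n}. d k \<ge> 1"
    and "i \<in> {1..n}"
    and "X \<subseteq> {1..n} - {i}"
    and "int (card X) \<le> int n - 1 - int (d i)"
  shows "(\<exists>E. simple_graph n E \<and> (\<forall>k \<in> {1..n}. degree n E k = d k)
              \<and> (\<forall>j \<in> X. \<not> E i j))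
         \<longleftrightarrow> graphical n (reduced d i (smallest (d i) ({1..n} - (X \<union> {i}))))"
proof -
  define S where "S = {1..n} - (X \<union> {i})"
  define L where "L = smallest (d i) S"
  have "S = ({1..n} - {i}) - X"
    unfolding S_def by auto
  then have "card S = n - 1 - card X"
    using assms(4,5) by (simp add: card_Diff_subset finite_subset)
  then have card_L: "card L = d i"
    unfolding L_def using assms(6) by (intro card_smallest) (auto simp: S_def)
  have L_S: "L \<subseteq> S"
    unfolding L_def by (rule smallest_subset)
  have dominant: "\<forall>l \<in> L. \<forall>u \<in> S - L. d u \<le> d l"
  proof (intro ballI)
    fix l u assume "l \<in> L" "u \<in> S - L"
    then have "l < u" "l \<in> {1..n}" "u \<in> {1..n}"
      using smallest_less L_S unfolding L_def S_def by auto
    then show "d u \<le> d l"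
      using assms(2) by simp
  qed
  have S_V: "S \<subseteq> {1..n} - {i}"
    unfolding S_def by blast
  have avoids_X: "(\<forall>j \<in> X. \<not> E i j) \<longleftrightarrow> neighbours n E i \<subseteq> S" if "simple_graph n E" for E
    using simple_graph_vertices[OF that] simple_graph_irrefl[OF that] assms(5)
    unfolding S_def neighbours_def by blast
  show ?thesis
    unfolding S_def[symmetric] L_def[symmetric]
  proof
    assume "\<exists>E. simple_graph n E \<and> (\<forall>k \<in> {1..n}. degree n E k = d k) \<and> (\<forall>j \<in> X. \<not> E i j)"
    then obtain E where "simple_graph n E" "\<forall>k \<in> {1..n}. degree n E k = d k"
      "neighbours n E i \<subseteq> S"
      using avoids_X by blast
    then obtain E' where "simple_graph n E'" "\<forall>k \<in> {1..n}. degree n E' k = d k"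
      "neighbours n E' i = L"
      using exists_realization_with_neighbours[OF _ _ assms(4) S_V _ L_S card_L dominant] by blast
    then show "graphical n (reduced d i L)"
      by (rule graphical_reduced_of_neighbours[OF _ _ assms(4)])
  next
    assume "graphical n (reduced d i L)"
    then obtain E where "simple_graph n E" "\<forall>k \<in> {1..n}. degree n E k = d k"
      "neighbours n E i = L"
      using realization_of_graphical_reduced[of n d i L] assms(3,4) L_S S_V card_L by blast
    then show "\<exists>E. simple_graph n E \<and> (\<forall>k \<in> {1..n}. degree n E k = d k) \<and> (\<forall>j \<in> X. \<not> E i j)"
      using avoids_X L_S by blast
  qed
qed

end
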